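(* Fix $d\ge 1$. There is a constant $c_d$ depending only on $d$ such that for every 2-dimensional binary matrix $X$ and every partition $\{x_i\}$ of $X$ into sub-matrices of size at most $d\times d$, $$\big|BDM_{\{x_i\}}(X)-H_{\{x_i\}}(X)\big|\le c_d\log(|\{x_i\}|),$$ that is, $|BDM_{\{x_i\}}(X)-H_{\{x_i\}}(X)|=O(\log|\{x_i\}|)$.
   Context: For a partition $\{x_i\}$ of $X$, $|\{x_i\}|$ is the number of blocks, and $Adj(X)_{\{x_i\}}$ is the set of pairs $(r_j,n_j)$ with $r_j$ the distinct blocks and $n_j$ the number of blocks equal to $r_j$ (so $\sum_j n_j=|\{x_i\}|$). $CTM(s)=-\log_2 D(t,k)(s)$, where $D(t,k)(s)$ is the fraction of halting $t$-state $k$-symbol (2-dimensional) Turing machines started on an empty tape that output $s$; CTM values are assumed available (finite) for all binary matrices of size at most $d\times d$. $BDM_{\{x_i\}}(X)=\sum_{(r_j,n_j)\in Adj(X)_{\{x_i\}}}(CTM(r_j)+\log_2 n_j)$. The block Shannon entropy is $H_{\{x_i\}}(X)=-\sum_{(r_j,n_j)\in Adj(X)_{\{x_i\}}}\frac{n_j}{|\{x_i\}|}\log_2\frac{n_j}{|\{x_i\}|}$, each block $r_j$ being treated as a symbol. *)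

theory Defs
  imports Complex_Main
begin

type_synonym bmat = "bool list list"

definition is_bmatrix :: "bmat \<Rightarrow> bool" where
  "is_bmatrix X \<longleftrightarrow> (\<forall>row \<in> set X. length row = length (hd X))"

definition nrows :: "bmat \<Rightarrow> nat" where "nrows X = length X"
definition ncols :: "bmat \<Rightarrow> nat" where "ncols X = (if X = [] then 0 else length (hd X))"

text \<open>A rectangle (i, j, h, w): top-left cell (row i, column j), height h, width w.\<close>
type_synonym rect = "nat \<times> nat \<times> nat \<times> nat"

definition rect_cells :: "rect \<Rightarrow> (nat \<times> nat) set" where
  "rect_cells R = (case R of (i, j, h, w) \<Rightarrow>
     {(r, c). i \<le> r \<and> r < i + h \<and> j \<le> c \<and> c < j + w})"

definition submatrix :: "bmat \<Rightarrow> rect \<Rightarrow> bmat" where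
  "submatrix X R = (case R of (i, j, h, w) \<Rightarrow>
     map (\<lambda>row. take w (drop j row)) (take h (drop i X)))"

definition is_block_partition :: "nat \<Rightarrow> bmat \<Rightarrow> rect set \<Rightarrow> bool" where
  "is_block_partition d X P \<longleftrightarrow>
     finite P \<and>
     (\<forall>R \<in> P. case R of (i, j, h, w) \<Rightarrow>
         1 \<le> h \<and> h \<le> d \<and> 1 \<le> w \<and> w \<le> d \<and> i + h \<le> nrows X \<and> j + w \<le> ncols X) \<and>
     (\<forall>R \<in> P. \<forall>R' \<in> P. R \<noteq> R' \<longrightarrow> rect_cells R \<inter> rect_cells R' = {}) \<and>
     (\<Union>R \<in> P. rect_cells R) = {..<nrows X} \<times> {..<ncols X}"

definition blocks :: "bmat \<Rightarrow> rect set \<Rightarrow> bmat set" where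
  "blocks X P = submatrix X ` P"

definition mult :: "bmat \<Rightarrow> rect set \<Rightarrow> bmat \<Rightarrow> nat" where
  "mult X P r = card {R \<in> P. submatrix X R = r}"

definition BDM :: "(bmat \<Rightarrow> real) \<Rightarrow> bmat \<Rightarrow> rect set \<Rightarrow> real" where
  "BDM ctm X P = (\<Sum>r \<in> blocks X P. ctm r + log 2 (real (mult X P r)))"

definition block_entropy :: "bmat \<Rightarrow> rect set \<Rightarrow> real" where
  "block_entropy X P = - (\<Sum>r \<in> blocks X P.
      (real (mult X P r) / real (card P)) * log 2 (real (mult X P r) / real (card P)))"

end

theory Submission
  imports Defs
begin

text \<open>Every block has at most d rows of at most d entries, so the distinct blocks range over a
  finite set \<open>bmats_upto d\<close> of matrices depending only on d. Subtracting the entropy from BDM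
  termwise, the term of a block r with multiplicity n among N blocks is
  \<open>CTM(r) + log n + (n/N) log (n/N)\<close>, whose absolute value is at most \<open>|CTM(r)| + 2 log N\<close>.
  Summing over the finite universe gives \<open>\<Sum>|CTM| + 2 card(bmats_upto d) log N\<close>, which is
  \<open>O(log N)\<close> since \<open>log N \<ge> 1\<close> for \<open>N \<ge> 2\<close>.\<close>

definition bmats_upto :: "nat \<Rightarrow> bmat set" where
  "bmats_upto d = {xs. set xs \<subseteq> {ys. length ys \<le> d} \<and> length xs \<le> d}"

lemma finite_bmats_upto: "finite (bmats_upto d)"
  unfolding bmats_upto_def by (intro finite_lists_length_le finite_lists_length_le[of UNIV, simplified]) auto

lemma blocks_subset_bmats_upto:
  assumes "is_block_partition d X P"
  shows "blocks X P \<subseteq> bmats_upto d"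
proof
  fix r assume "r \<in> blocks X P"
  then obtain i j h w where R: "(i, j, h, w) \<in> P" and r: "r = submatrix X (i, j, h, w)"
    unfolding blocks_def by auto
  from assms R have "h \<le> d" "w \<le> d" unfolding is_block_partition_def by auto
  then show "r \<in> bmats_upto d" unfolding r submatrix_def bmats_upto_def by auto
qed

lemma mult_pos_le_card:
  assumes "finite P" and "r \<in> blocks X P"
  shows "1 \<le> mult X P r" and "mult X P r \<le> card P"
proof -
  from assms(2) have "{R \<in> P. submatrix X R = r} \<noteq> {}" unfolding blocks_def by auto
  with assms(1) show "1 \<le> mult X P r"
    unfolding mult_def by (simp add: Suc_le_eq card_gt_0_iff)
  show "mult X P r \<le> card P" unfolding mult_def using assms(1) by (intro card_mono) auto
qed

lemma BDM_minus_block_entropy: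
  "BDM ctm X P - block_entropy X P =
     (\<Sum>r\<in>blocks X P. ctm r + log 2 (real (mult X P r)) +
        real (mult X P r) / real (card P) * log 2 (real (mult X P r) / real (card P)))"
  unfolding BDM_def block_entropy_def by (simp add: sum.distrib)

lemma abs_frac_mult_log_frac_le:
  fixes m N :: nat
  assumes "1 \<le> m" and "m \<le> N"
  shows "\<bar>real m / real N * log 2 (real m / real N)\<bar> \<le> log 2 (real N)"
proof -
  have p_pos: "0 < real m / real N" and p_le_1: "real m / real N \<le> 1"
    using assms by auto
  have log_frac: "log 2 (real m / real N) = log 2 (real m) - log 2 (real N)"
    using assms by (simp add: log_divide)
  have log_m: "0 \<le> log 2 (real m)" "log 2 (real m) \<le> log 2 (real N)"
    using assms by simp_all
  have "\<bar>real m / real N * log 2 (real m / real N)\<bar>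
        = real m / real N * (- log 2 (real m / real N))"
    using p_pos log_frac log_m by (simp add: abs_mult)
  also have "\<dots> \<le> 1 * log 2 (real N)"
    by (rule mult_mono) (use p_le_1 log_frac log_m in auto)
  finally show ?thesis by simp
qed

lemma abs_BDM_term_le:
  fixes m N :: nat and a :: real
  assumes "1 \<le> m" and "m \<le> N"
  shows "\<bar>a + log 2 (real m) + real m / real N * log 2 (real m / real N)\<bar>
         \<le> \<bar>a\<bar> + 2 * log 2 (real N)"
proof -
  have "0 \<le> log 2 (real m)" "log 2 (real m) \<le> log 2 (real N)"
    using assms by simp_all
  with abs_frac_mult_log_frac_le[OF assms] show ?thesis
    by (smt (verit) abs_triangle_ineq)
qed

lemma abs_BDM_minus_block_entropy_le:
  assumes "finite P" and "card P \<ge> 1" and "finite S" and "blocks X P \<subseteq> S"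
  shows "\<bar>BDM ctm X P - block_entropy X P\<bar>
         \<le> (\<Sum>r\<in>S. \<bar>ctm r\<bar>) + 2 * real (card S) * log 2 (real (card P))"
proof -
  let ?N = "card P"
  have "\<bar>BDM ctm X P - block_entropy X P\<bar> \<le>
     (\<Sum>r\<in>blocks X P. \<bar>ctm r + log 2 (real (mult X P r)) +
        real (mult X P r) / real ?N * log 2 (real (mult X P r) / real ?N)\<bar>)"
    unfolding BDM_minus_block_entropy by (rule sum_abs)
  also have "\<dots> \<le> (\<Sum>r\<in>blocks X P. \<bar>ctm r\<bar> + 2 * log 2 (real ?N))"
    by (intro sum_mono abs_BDM_term_le mult_pos_le_card[OF assms(1)])
  also have "\<dots> \<le> (\<Sum>r\<in>S. \<bar>ctm r\<bar> + 2 * log 2 (real ?N))"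
    by (rule sum_mono2[OF assms(3,4)]) (use assms(2) in simp)
  also have "\<dots> = (\<Sum>r\<in>S. \<bar>ctm r\<bar>) + 2 * real (card S) * log 2 (real ?N)"
    by (simp add: sum.distrib)
  finally show ?thesis .
qed

theorem proposition2:
  fixes ctm :: "bmat \<Rightarrow> real" and d :: nat
  assumes "d \<ge> 1"
  shows "\<exists>c::real. \<forall>X P. is_bmatrix X \<longrightarrow> is_block_partition d X P \<longrightarrow> card P \<ge> 2 \<longrightarrow>
           \<bar>BDM ctm X P - block_entropy X P\<bar> \<le> c * log 2 (real (card P))"
proof (intro exI allI impI)
  fix X P
  assume partition: "is_block_partition d X P" and two_le: "card P \<ge> 2"
  define M where "M = (\<Sum>r\<in>bmats_upto d. \<bar>ctm r\<bar>)"
  have log_ge_1: "1 \<le> log 2 (real (card P))" using two_le by simp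
  have "M \<le> M * log 2 (real (card P))"
    using log_ge_1 mult_left_mono[of 1 _ M] unfolding M_def by (simp add: sum_nonneg)
  moreover have "\<bar>BDM ctm X P - block_entropy X P\<bar>
                 \<le> M + 2 * real (card (bmats_upto d)) * log 2 (real (card P))"
    unfolding M_def using partition two_le
    by (intro abs_BDM_minus_block_entropy_le finite_bmats_upto blocks_subset_bmats_upto)
       (auto simp: is_block_partition_def)
  ultimately show "\<bar>BDM ctm X P - block_entropy X P\<bar>
                   \<le> (M + 2 * real (card (bmats_upto d))) * log 2 (real (card P))"
    by (simp add: algebra_simps)
qed

end
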